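(* If $d: t \to_w^* u$ is a reduction sequence, then $t \to_{w\neg gcv}^{k} \to_{wgcv}^{h} u$ where $k$ is the number of $\to_{w\neg gcv}$ steps in $d$ and $h$ is greater than or equal to the number of $\to_{wgcv}$ steps in $d$.
   Context: Terms: $t,u,s ::= x \mid \lambda x.t \mid t\,u \mid t[x\backslash u]$, where $t[x\backslash u]$ is an explicit substitution binding $x$ in $t$; terms up to $\alpha$-renaming. Values: $v ::= \lambda x.t$. Substitution contexts: $S ::= \langle\cdot\rangle \mid S[x\backslash u]$. Weak contexts: $W ::= \langle\cdot\rangle \mid W\,t \mid t\,W \mid t[x\backslash W] \mid W[x\backslash u]$. $W\langle\langle t\rangle\rangle$ denotes plugging where $W$ does not capture free variables of $t$. Root rules: $S\langle \lambda x.t\rangle u \mapsto_m S\langle t[x\backslash u]\rangle$; $W\langle\langle x\rangle\rangle[x\backslash u] \mapsto_{e} W\langle\langle u\rangle\rangle[x\backslash u]$ ($W$ weak context); $t[x\backslash S\langle v\rangle] \mapsto_{gcv} S\langle t\rangle$ if $x\notin\mathrm{fv}(t)$. $\to_{wm},\to_{we},\to_{wgcv}$ are their closures under weak contexts, $\to_w$ their union, $\to_{w\neg gcv}:=\to_{wm}\cup\to_{we}$. *)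

theory Defs
  imports Main
begin

text \<open>Terms up to alpha-renaming, represented with de Bruijn indices.
  ES t u stands for t[x\u]; the explicit substitution binds index 0 in t (not in u).\<close>

datatype trm = Var nat | Lam trm | App trm trm | ES trm trm

fun lift :: "nat \<Rightarrow> nat \<Rightarrow> trm \<Rightarrow> trm" where
  "lift k c (Var i) = (if i < c then Var i else Var (i + k))"
| "lift k c (Lam t) = Lam (lift k (Suc c) t)"
| "lift k c (App t u) = App (lift k c t) (lift k c u)"
| "lift k c (ES t u) = ES (lift k (Suc c) t) (lift k c u)"

text \<open>lower c t: remove the (non-occurring) variable c, decrementing indices > c.\<close>
fun lower :: "nat \<Rightarrow> trm \<Rightarrow> trm" where
  "lower c (Var i) = (if i < c then Var i else Var (i - 1))"
| "lower c (Lam t) = Lam (lower (Suc c) t)"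
| "lower c (App t u) = App (lower c t) (lower c u)"
| "lower c (ES t u) = ES (lower (Suc c) t) (lower c u)"

fun occurs :: "nat \<Rightarrow> trm \<Rightarrow> bool" where
  "occurs c (Var i) = (i = c)"
| "occurs c (Lam t) = occurs (Suc c) t"
| "occurs c (App t u) = (occurs c t \<or> occurs c u)"
| "occurs c (ES t u) = (occurs (Suc c) t \<or> occurs c u)"

text \<open>Substitution contexts S ::= <.> | S[x\u], as the list of substituted terms,
  outermost first: plugS (u # S) t = (plugS S t)[x\u].\<close>
fun plugS :: "trm list \<Rightarrow> trm \<Rightarrow> trm" where
  "plugS [] t = t"
| "plugS (u # S) t = ES (plugS S t) u"

datatype wctx = Hole | CAppL wctx trm | CAppR trm wctx | CESR trm wctx | CESL wctx trm

fun plugW :: "wctx \<Rightarrow> trm \<Rightarrow> trm" where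
  "plugW Hole t = t"
| "plugW (CAppL W u) t = App (plugW W t) u"
| "plugW (CAppR u W) t = App u (plugW W t)"
| "plugW (CESR u W) t = ES u (plugW W t)"
| "plugW (CESL W u) t = ES (plugW W t) u"

fun depthW :: "wctx \<Rightarrow> nat" where
  "depthW Hole = 0"
| "depthW (CAppL W u) = depthW W"
| "depthW (CAppR u W) = depthW W"
| "depthW (CESR u W) = depthW W"
| "depthW (CESL W u) = Suc (depthW W)"

datatype rkind = KM | KE | KGCV

inductive wstep :: "rkind \<Rightarrow> trm \<Rightarrow> trm \<Rightarrow> bool" where
  root_m: "wstep KM (App (plugS S (Lam t)) u) (plugS S (ES t (lift (length S) 0 u)))"
| root_e: "wstep KE (ES (plugW W (Var (depthW W))) u)
                    (ES (plugW W (lift (Suc (depthW W)) 0 u)) u)"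
| root_gcv: "\<not> occurs 0 t \<Longrightarrow>
     wstep KGCV (ES t (plugS S (Lam v))) (plugS S (lift (length S) 0 (lower 0 t)))"
| appL: "wstep k t t' \<Longrightarrow> wstep k (App t u) (App t' u)"
| appR: "wstep k u u' \<Longrightarrow> wstep k (App t u) (App t u')"
| esL: "wstep k t t' \<Longrightarrow> wstep k (ES t u) (ES t' u)"
| esR: "wstep k u u' \<Longrightarrow> wstep k (ES t u) (ES t u')"

definition wngcv :: "trm \<Rightarrow> trm \<Rightarrow> bool" where
  "wngcv t u \<longleftrightarrow> wstep KM t u \<or> wstep KE t u"

definition wgcv :: "trm \<Rightarrow> trm \<Rightarrow> bool" where
  "wgcv t u \<longleftrightarrow> wstep KGCV t u"

text \<open>A reduction sequence d : t ->w* u, recorded by the list of labels of its steps.\<close>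
inductive wseq :: "trm \<Rightarrow> rkind list \<Rightarrow> trm \<Rightarrow> bool" where
  nil: "wseq t [] t"
| cons: "wstep k t s \<Longrightarrow> wseq s ks u \<Longrightarrow> wseq t (k # ks) u"

end

theory Submission
  imports Defs
begin

(* gcv steps can be postponed. If a gcv step is followed by an m or e step, the latter can be
   fired first and then followed by one or more gcv steps: m and e steps never erase the gcv
   redex, and an e step duplicates it exactly when it copies the substitution containing it. The
   only delicate cases of this local swap are an m or e step at the root consuming an answer
   S<\<lambda>x.b> or a variable occurrence W<<x>> that the gcv step has just produced; then the
   gcv step already acted on a term of the same shape and commutes with the m or e step.
   Pushing the gcv steps of d one at a time to the end of the sequence keeps the m and e steps
   and can only increase the number of gcv steps. *)

section \<open>Postponement in abstract rewriting\<close>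

context
  fixes G R :: "'a \<Rightarrow> 'a \<Rightarrow> bool"
  assumes postpone: "G OO R \<le> R OO G\<^sup>+\<^sup>+"
begin

lemma relpowp_postpone_step: "(G ^^ n) t s \<Longrightarrow> R s u \<Longrightarrow> \<exists>r m. R t r \<and> (G ^^ m) r u \<and> n \<le> m"
proof (induction n arbitrary: t)
  case 0
  then show ?case by (intro exI[of _ u] exI[of _ 0]) auto
next
  case (Suc n)
  from relpowp_Suc_D2[OF \<open>(G ^^ Suc n) t s\<close>] obtain t1 where "G t t1" "(G ^^ n) t1 s"
    by blast
  with Suc obtain r1 m1 where "R t1 r1" "(G ^^ m1) r1 u" "n \<le> m1"
    by blast
  from postpone \<open>G t t1\<close> \<open>R t1 r1\<close> have "(R OO G\<^sup>+\<^sup>+) t r1"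
    by blast
  then obtain r m where "R t r" "(G ^^ m) r r1" "0 < m"
    by (auto simp: tranclp_power)
  with \<open>(G ^^ m1) r1 u\<close> \<open>n \<le> m1\<close> have "R t r \<and> (G ^^ (m + m1)) r u \<and> Suc n \<le> m + m1"
    by (auto simp: relpowp_add)
  then show ?case by blast
qed

lemma relpowp_postpone:
  "(G ^^ n) t s \<Longrightarrow> (R ^^ k) s u \<Longrightarrow> \<exists>r m. (R ^^ k) t r \<and> (G ^^ m) r u \<and> n \<le> m"
proof (induction k arbitrary: n t s)
  case 0
  then show ?case by auto
next
  case (Suc k)
  from relpowp_Suc_D2[OF \<open>(R ^^ Suc k) s u\<close>] obtain s1 where "R s s1" "(R ^^ k) s1 u"
    by blast
  with relpowp_postpone_step \<open>(G ^^ n) t s\<close> obtain r1 m1 where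
    "R t r1" "(G ^^ m1) r1 s1" "n \<le> m1"
    by blast
  with Suc.IH \<open>(R ^^ k) s1 u\<close> obtain r m where "(R ^^ k) r1 r" "(G ^^ m) r u" "m1 \<le> m"
    by blast
  moreover from \<open>R t r1\<close> \<open>(R ^^ k) r1 r\<close> have "(R ^^ Suc k) t r"
    by (rule relpowp_Suc_I2)
  moreover have "n \<le> m" using \<open>n \<le> m1\<close> \<open>m1 \<le> m\<close> by simp
  ultimately show ?case
    using \<open>(G ^^ m) r u\<close> by blast
qed

lemma relpowp_postpone_Cons:
  assumes "G t s" and "(R ^^ k) s s'" and "(G ^^ h) s' u"
  shows "\<exists>r h'. (R ^^ k) t r \<and> (G ^^ h') r u \<and> Suc h \<le> h'"
proof -
  from \<open>G t s\<close> have "(G ^^ 1) t s" by (simp only: relpowp_1)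
  from relpowp_postpone[OF this \<open>(R ^^ k) s s'\<close>] obtain r m where
    "(R ^^ k) t r" "(G ^^ m) r s'" "1 \<le> m"
    by blast
  with \<open>(G ^^ h) s' u\<close> show ?thesis
    by (intro exI[of _ r] exI[of _ "m + h"]) (auto simp: relpowp_add)
qed

end

section \<open>Shifting of de Bruijn indices and contexts\<close>

lemma lift_lift: "c \<le> d \<Longrightarrow> d \<le> c + m \<Longrightarrow> lift n d (lift m c t) = lift (n + m) c t"
  by (induction t arbitrary: c d) auto

lemma lift_lift_comm: "j \<le> c \<Longrightarrow> lift n (c + m) (lift m j t) = lift m j (lift n c t)"
  by (induction t arbitrary: c j) (auto simp flip: add_Suc)

lemma lower_lift [simp]: "lower c (lift (Suc 0) c t) = t"
  by (induction t arbitrary: c) auto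

lemma lift_lower: "\<not> occurs c t \<Longrightarrow> lift (Suc 0) c (lower c t) = t"
  by (induction t arbitrary: c) auto

lemma lower_lift_comm: "\<not> occurs d t \<Longrightarrow> d \<le> c \<Longrightarrow> lower d (lift n (Suc c) t) = lift n c (lower d t)"
  by (induction t arbitrary: c d) auto

lemma occurs_lift:
  "occurs i (lift n c t) = (if i < c then occurs i t else if i < c + n then False else occurs (i - n) t)"
  by (induction t arbitrary: i c) (auto simp: Suc_diff_le)

lemma lift_eq_Var_iff: "lift n c a = Var j \<longleftrightarrow> (\<exists>i. a = Var i \<and> j = (if i < c then i else i + n))"
  by (cases a) auto

lemma lift_eq_Lam_iff: "lift n c a = Lam b \<longleftrightarrow> (\<exists>a'. a = Lam a' \<and> b = lift n (Suc c) a')"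
  by (cases a) auto

lemma lift_eq_App_iff:
  "lift n c a = App x y \<longleftrightarrow> (\<exists>a1 a2. a = App a1 a2 \<and> x = lift n c a1 \<and> y = lift n c a2)"
  by (cases a) auto

lemma lift_eq_ES_iff:
  "lift n c a = ES x y \<longleftrightarrow> (\<exists>a1 a2. a = ES a1 a2 \<and> x = lift n (Suc c) a1 \<and> y = lift n c a2)"
  by (cases a) auto

fun liftS :: "nat \<Rightarrow> nat \<Rightarrow> trm list \<Rightarrow> trm list" where
  "liftS n c [] = []"
| "liftS n c (u # S) = lift n c u # liftS n (Suc c) S"

fun liftW :: "nat \<Rightarrow> nat \<Rightarrow> wctx \<Rightarrow> wctx" where
  "liftW n c Hole = Hole"
| "liftW n c (CAppL W u) = CAppL (liftW n c W) (lift n c u)"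
| "liftW n c (CAppR u W) = CAppR (lift n c u) (liftW n c W)"
| "liftW n c (CESR u W) = CESR (lift n (Suc c) u) (liftW n c W)"
| "liftW n c (CESL W u) = CESL (liftW n (Suc c) W) (lift n c u)"

fun plugSW :: "trm list \<Rightarrow> wctx \<Rightarrow> wctx" where
  "plugSW [] W = W"
| "plugSW (u # S) W = CESL (plugSW S W) u"

lemma length_liftS [simp]: "length (liftS n c S) = length S"
  by (induction S arbitrary: c) auto

lemma depthW_liftW [simp]: "depthW (liftW n c W) = depthW W"
  by (induction W arbitrary: c) auto

lemma depthW_plugSW [simp]: "depthW (plugSW S W) = length S + depthW W"
  by (induction S) auto

lemma plugW_plugSW [simp]: "plugW (plugSW S W) t = plugS S (plugW W t)"
  by (induction S) auto

lemma plugS_append: "plugS (S1 @ S2) t = plugS S1 (plugS S2 t)"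
  by (induction S1) auto

lemma lift_plugS: "lift n c (plugS S t) = plugS (liftS n c S) (lift n (c + length S) t)"
  by (induction S arbitrary: c) auto

lemma lift_plugW: "lift n c (plugW W t) = plugW (liftW n c W) (lift n (c + depthW W) t)"
  by (induction W arbitrary: c) auto

lemma lift_eq_plugS:
  "lift n c a = plugS S t \<Longrightarrow> \<exists>Sa ta. a = plugS Sa ta \<and> S = liftS n c Sa \<and> lift n (c + length S) ta = t"
proof (induction S arbitrary: a c)
  case Nil
  then show ?case by (intro exI[of _ "[]"]) auto
next
  case (Cons u S)
  then obtain a1 a2 where "a = ES a1 a2" "lift n (Suc c) a1 = plugS S t" "u = lift n c a2"
    by (auto simp: lift_eq_ES_iff)
  with Cons.IH show ?case
    by (fastforce intro: exI[of _ "a2 # _"])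
qed

lemma lift_eq_plugW:
  "lift n c a = plugW W t \<Longrightarrow> \<exists>Wa ta. a = plugW Wa ta \<and> W = liftW n c Wa \<and> lift n (c + depthW W) ta = t"
proof (induction W arbitrary: a c)
  case Hole
  then show ?case by (intro exI[of _ Hole]) auto
next
  case (CAppL W u)
  then obtain a1 a2 where "a = App a1 a2" "lift n c a1 = plugW W t" "u = lift n c a2"
    by (auto simp: lift_eq_App_iff)
  with CAppL.IH show ?case by (fastforce intro: exI[of _ "CAppL _ a2"])
next
  case (CAppR u W)
  then obtain a1 a2 where "a = App a1 a2" "lift n c a2 = plugW W t" "u = lift n c a1"
    by (auto simp: lift_eq_App_iff)
  with CAppR.IH show ?case by (fastforce intro: exI[of _ "CAppR a1 _"])
next
  case (CESR u W)
  then obtain a1 a2 where "a = ES a1 a2" "lift n c a2 = plugW W t" "u = lift n (Suc c) a1"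
    by (auto simp: lift_eq_ES_iff)
  with CESR.IH show ?case by (fastforce intro: exI[of _ "CESR a1 _"])
next
  case (CESL W u)
  then obtain a1 a2 where "a = ES a1 a2" "lift n (Suc c) a1 = plugW W t" "u = lift n c a2"
    by (auto simp: lift_eq_ES_iff)
  with CESL.IH show ?case by (fastforce intro: exI[of _ "CESL _ a2"])
qed

lemma plugS_eq_plugS_Lam: "plugS S1 t = plugS S (Lam b) \<Longrightarrow> \<exists>S2. S = S1 @ S2 \<and> t = plugS S2 (Lam b)"
proof (induction S1 arbitrary: S)
  case (Cons u S1)
  then show ?case by (cases S) auto
qed simp

lemma plugS_Lam_neq_App [simp]: "plugS S (Lam b) \<noteq> App t u" "App t u \<noteq> plugS S (Lam b)"
  by (cases S; simp)+

lemma plugW_Var_eq_plugS: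
  assumes "plugW W (Var i) = plugS S t"
  shows "(\<exists>W1. W = plugSW S W1 \<and> plugW W1 (Var i) = t) \<or>
    (\<exists>S1 S2 W1. S = S1 @ plugW W1 (Var i) # S2 \<and> W = plugSW S1 (CESR (plugS S2 t) W1))"
  using assms
proof (induction S arbitrary: W)
  case Nil
  then show ?case by auto
next
  case (Cons u S)
  show ?case
  proof (cases W)
    case (CESR a W1)
    with Cons.prems show ?thesis by (intro disjI2 exI[of _ "[]"] exI[of _ S] exI[of _ W1]) auto
  next
    case (CESL W0 u')
    with Cons.prems have "plugW W0 (Var i) = plugS S t" "u' = u" by auto
    from Cons.IH[OF this(1)] show ?thesis
    proof (elim disjE exE conjE)
      fix S1 S2 W1
      assume "S = S1 @ plugW W1 (Var i) # S2" "W0 = plugSW S1 (CESR (plugS S2 t) W1)"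
      with CESL \<open>u' = u\<close> show ?thesis by (intro disjI2 exI[of _ "u # S1"] exI[of _ S2] exI[of _ W1]) auto
    qed (use CESL \<open>u' = u\<close> in auto)
  qed (use Cons.prems in auto)
qed

lemma occurs_plugW_Var: "occurs c (plugW W (Var (c + depthW W)))"
  by (induction W arbitrary: c) (auto simp flip: add_Suc)

lemma wstep_plugS: "wstep k t t' \<Longrightarrow> wstep k (plugS S t) (plugS S t')"
  by (induction S) (auto intro: wstep.esL)

lemma wstep_plugW: "wstep k t t' \<Longrightarrow> wstep k (plugW W t) (plugW W t')"
  by (induction W) (auto intro: wstep.intros)

lemma wgcv_tranclp_plugW: "wgcv\<^sup>+\<^sup>+ t t' \<Longrightarrow> wgcv\<^sup>+\<^sup>+ (plugW W t) (plugW W t')"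
  by (induction rule: tranclp_induct) (auto simp: wgcv_def intro: wstep_plugW tranclp.trancl_into_trancl)

lemma wstep_lift: "wstep k t t' \<Longrightarrow> wstep k (lift n c t) (lift n c t')"
proof (induction arbitrary: c rule: wstep.induct)
  case (root_m S t u)
  show ?case
    using wstep.root_m[of "liftS n c S" "lift n (Suc (c + length S)) t" "lift n c u"]
    by (simp add: lift_plugS lift_lift_comm)
next
  case (root_e W u)
  have "lift n (Suc (c + depthW W)) (lift (Suc (depthW W)) 0 u) = lift (Suc (depthW W)) 0 (lift n c u)"
    using lift_lift_comm[of 0 c n "Suc (depthW W)" u] by simp
  then show ?case
    using wstep.root_e[of "liftW n (Suc c) W" "lift n c u"] by (simp add: lift_plugW)
next
  case (root_gcv t S v)
  then have "\<not> occurs 0 (lift n (Suc c) t)" "lower 0 (lift n (Suc c) t) = lift n c (lower 0 t)"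
    by (simp_all add: occurs_lift lower_lift_comm)
  then show ?case
    using wstep.root_gcv[of "lift n (Suc c) t" "liftS n c S" "lift n (Suc (c + length S)) v"]
    by (simp add: lift_plugS lift_lift_comm)
qed (auto intro: wstep.intros)

lemma wstep_from_lift:
  assumes "wstep k (lift n c t) s"
  shows "\<exists>t'. wstep k t t' \<and> s = lift n c t'"
proof -
  have "wstep k r s \<Longrightarrow> lift n c t = r \<Longrightarrow> \<exists>t'. wstep k t t' \<and> s = lift n c t'" for r
  proof (induction arbitrary: c t rule: wstep.induct)
    case (root_m S b u)
    then obtain t1 u0 where t: "t = App t1 u0" "lift n c t1 = plugS S (Lam b)" "u = lift n c u0"
      by (auto simp: lift_eq_App_iff)
    from lift_eq_plugS[OF t(2)] obtain Sa b0 where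
      "t1 = plugS Sa (Lam b0)" "S = liftS n c Sa" "b = lift n (Suc (c + length S)) b0"
      by (auto simp: lift_eq_Lam_iff)
    with t show ?case
      by (intro exI[of _ "plugS Sa (ES b0 (lift (length Sa) 0 u0))"])
        (simp add: wstep.root_m lift_plugS lift_lift_comm)
  next
    case (root_e W u)
    then obtain t1 u0 where t: "t = ES t1 u0" "lift n (Suc c) t1 = plugW W (Var (depthW W))" "u = lift n c u0"
      by (auto simp: lift_eq_ES_iff)
    from lift_eq_plugW[OF t(2)] obtain Wa where "t1 = plugW Wa (Var (depthW Wa))" "W = liftW n (Suc c) Wa"
      by (auto simp: lift_eq_Var_iff split: if_splits)
    moreover have "lift n (Suc (c + depthW Wa)) (lift (Suc (depthW Wa)) 0 u0) = lift (Suc (depthW Wa)) 0 (lift n c u0)"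
      using lift_lift_comm[of 0 c n "Suc (depthW Wa)" u0] by simp
    ultimately show ?case using t
      by (intro exI[of _ "ES (plugW Wa (lift (Suc (depthW Wa)) 0 u0)) u0"])
        (simp add: wstep.root_e lift_plugW)
  next
    case (root_gcv t0 S v)
    then obtain ta pa where t: "t = ES ta pa" "t0 = lift n (Suc c) ta" "lift n c pa = plugS S (Lam v)"
      by (auto simp: lift_eq_ES_iff)
    from lift_eq_plugS[OF t(3)] obtain Sa va where "pa = plugS Sa (Lam va)" "S = liftS n c Sa"
      by (auto simp: lift_eq_Lam_iff)
    moreover have "\<not> occurs 0 ta" "lower 0 (lift n (Suc c) ta) = lift n c (lower 0 ta)"
      using root_gcv(1) t(2) by (simp_all add: occurs_lift lower_lift_comm)
    ultimately show ?case using t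
      by (intro exI[of _ "plugS Sa (lift (length Sa) 0 (lower 0 ta))"])
        (simp add: wstep.root_gcv lift_plugS lift_lift_comm)
  qed (fastforce simp: lift_eq_App_iff lift_eq_ES_iff intro: wstep.intros)+
  with assms show ?thesis by blast
qed

section \<open>Terms produced by a gcv step\<close>

lemma wstep_gcv_lift: "wstep KGCV (ES (lift 1 0 a) (plugS S (Lam v))) (plugS S (lift (length S) 0 a))"
  using wstep.root_gcv[of "lift 1 0 a" S v] by (simp add: occurs_lift)

lemma wgcv_root_to_answer:
  assumes "plugS S (lift (length S) 0 a) = plugS T (Lam b)"
  shows "\<exists>T' b'. ES (lift 1 0 a) (plugS S (Lam v)) = plugS T' (Lam b') \<and>
    (\<forall>w. wstep KGCV (plugS T' (ES b' (lift (length T') 0 w))) (plugS T (ES b (lift (length T) 0 w))))"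
proof -
  from plugS_eq_plugS_Lam[OF assms] obtain T1 where
    T: "T = S @ T1" "lift (length S) 0 a = plugS T1 (Lam b)" by auto
  from lift_eq_plugS[OF T(2)] obtain T1a ba where
    a: "a = plugS T1a (Lam ba)" "T1 = liftS (length S) 0 T1a" "b = lift (length S) (Suc (length T1)) ba"
    by (auto simp: lift_eq_Lam_iff)
  let ?P = "plugS S (Lam v)"
  let ?T' = "?P # liftS 1 0 T1a"
  show ?thesis
  proof (intro exI conjI allI)
    show "ES (lift 1 0 a) ?P = plugS ?T' (Lam (lift 1 (Suc (length T1a)) ba))"
      using a by (simp add: lift_plugS)
  next
    fix w
    let ?X = "plugS T1a (ES ba (lift (length T1a) 0 w))"
    have "plugS ?T' (ES (lift 1 (Suc (length T1a)) ba) (lift (length ?T') 0 w)) = ES (lift 1 0 ?X) ?P"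
      by (simp add: lift_plugS lift_lift)
    moreover have "plugS S (lift (length S) 0 ?X) = plugS T (ES b (lift (length T) 0 w))"
      using T(1) a by (simp add: lift_plugS lift_lift plugS_append)
    ultimately show "wstep KGCV (plugS ?T' (ES (lift 1 (Suc (length T1a)) ba) (lift (length ?T') 0 w)))
        (plugS T (ES b (lift (length T) 0 w)))"
      using wstep_gcv_lift[of ?X S v] by simp
  qed
qed

lemma wgcv_to_answer:
  assumes "wstep KGCV t (plugS S (Lam b))"
  shows "\<exists>S' b'. t = plugS S' (Lam b') \<and>
    (\<forall>w. wstep KGCV (plugS S' (ES b' (lift (length S') 0 w))) (plugS S (ES b (lift (length S) 0 w))))"
  using assms
proof (induction KGCV t "plugS S (Lam b)" arbitrary: S b rule: wstep.induct)
  case (root_gcv t S2 v)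
  then show ?case
    using wgcv_root_to_answer[of S2 "lower 0 t" S b v] by (simp add: lift_lower)
next
  case (esL t t' u)
  obtain S0 where S: "S = u # S0" "t' = plugS S0 (Lam b)"
    using \<open>ES t' u = plugS S (Lam b)\<close> by (cases S) auto
  from esL.hyps(2)[OF S(2)] obtain S' b' where
    t: "t = plugS S' (Lam b')" and
    comm: "\<And>w. wstep KGCV (plugS S' (ES b' (lift (length S') 0 w))) (plugS S0 (ES b (lift (length S0) 0 w)))"
    by blast
  have "wstep KGCV (plugS (u # S') (ES b' (lift (length (u # S')) 0 w))) (plugS S (ES b (lift (length S) 0 w)))" for w
    using comm[of "lift 1 0 w"] S(1) by (simp add: lift_lift wstep.esL)
  with t show ?case by (intro exI[of _ "u # S'"]) auto
next
  case (esR u u' t)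
  then obtain S0 where "S = u' # S0" "t = plugS S0 (Lam b)" by (cases S) auto
  with esR.hyps(1) show ?case
    by (intro exI[of _ "u # S0"] exI[of _ b]) (simp add: wstep.esR)
qed simp_all

lemma wgcv_root_to_plugW_Var:
  assumes "plugS S (lift (length S) 0 a) = plugW W (Var (n + depthW W))"
  shows "\<exists>W'. ES (lift 1 0 a) (plugS S (Lam v)) = plugW W' (Var (n + depthW W')) \<and>
    (\<forall>w. wstep KGCV (plugW W' (lift (Suc n + depthW W') 0 w)) (plugW W (lift (Suc n + depthW W) 0 w)))"
proof -
  let ?A = "lift (length S) 0 a"
  let ?P = "plugS S (Lam v)"
  from plugW_Var_eq_plugS[OF assms[symmetric]] show ?thesis
  proof (elim disjE exE conjE)
    fix W1
    assume W: "W = plugSW S W1" and "plugW W1 (Var (n + depthW W)) = ?A"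
    from lift_eq_plugW[OF this(2)[symmetric]] W obtain Wa where
      a: "a = plugW Wa (Var (n + depthW Wa))" and W1: "W1 = liftW (length S) 0 Wa"
      by (auto simp: lift_eq_Var_iff split: if_splits)
    let ?W' = "CESL (liftW 1 0 Wa) ?P"
    show ?thesis
    proof (intro exI conjI allI)
      show "ES (lift 1 0 a) ?P = plugW ?W' (Var (n + depthW ?W'))"
        using a by (simp add: lift_plugW)
    next
      fix w
      let ?a' = "plugW Wa (lift (Suc n + depthW Wa) 0 w)"
      have "plugW ?W' (lift (Suc n + depthW ?W') 0 w) = ES (lift 1 0 ?a') ?P"
        by (simp add: lift_plugW lift_lift)
      moreover have "plugS S (lift (length S) 0 ?a') = plugW W (lift (Suc n + depthW W) 0 w)"
        using W W1 by (simp add: lift_plugW lift_lift algebra_simps)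
      ultimately show "wstep KGCV (plugW ?W' (lift (Suc n + depthW ?W') 0 w)) (plugW W (lift (Suc n + depthW W) 0 w))"
        using wstep_gcv_lift[of ?a' S v] by simp
    qed
  next
    fix S1 S2 W1
    assume S: "S = S1 @ plugW W1 (Var (n + depthW W)) # S2" and W: "W = plugSW S1 (CESR (plugS S2 ?A) W1)"
    let ?W' = "CESR (lift 1 0 a) (plugSW S1 (CESR (plugS S2 (Lam v)) W1))"
    show ?thesis
    proof (intro exI conjI allI)
      show "ES (lift 1 0 a) ?P = plugW ?W' (Var (n + depthW ?W'))"
        using S W by (simp add: plugS_append)
    next
      fix w
      let ?S' = "S1 @ plugW W1 (lift (Suc n + depthW W) 0 w) # S2"
      have "plugW ?W' (lift (Suc n + depthW ?W') 0 w) = ES (lift 1 0 a) (plugS ?S' (Lam v))"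
        using W by (simp add: plugS_append)
      moreover have "plugS ?S' (lift (length ?S') 0 a) = plugW W (lift (Suc n + depthW W) 0 w)"
        using S W by (simp add: plugS_append)
      ultimately show "wstep KGCV (plugW ?W' (lift (Suc n + depthW ?W') 0 w)) (plugW W (lift (Suc n + depthW W) 0 w))"
        using wstep_gcv_lift[of a ?S' v] by simp
    qed
  qed
qed

lemma wgcv_to_plugW_Var:
  assumes "wstep KGCV t (plugW W (Var (n + depthW W)))"
  shows "\<exists>W'. t = plugW W' (Var (n + depthW W')) \<and>
    (\<forall>w. wstep KGCV (plugW W' (lift (Suc n + depthW W') 0 w)) (plugW W (lift (Suc n + depthW W) 0 w)))"
  using assms
proof (induction KGCV t "plugW W (Var (n + depthW W))" arbitrary: W n rule: wstep.induct)
  case (root_gcv t S v)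
  then show ?case
    using wgcv_root_to_plugW_Var[of S "lower 0 t" W n v] by (simp add: lift_lower)
next
  case (appL t t' u)
  then show ?case
    by (cases W) (fastforce intro: exI[of _ "CAppL _ u"] exI[of _ "CAppR t _"] wstep.appL)+
next
  case (appR u u' t)
  then show ?case
    by (cases W) (fastforce intro: exI[of _ "CAppR t _"] exI[of _ "CAppL _ u"] wstep.appR)+
next
  case (esL t t' u)
  show ?case
  proof (cases W)
    case (CESL W0 u0)
    with esL.hyps(2)[of W0 "Suc n"] \<open>ES t' u = plugW W (Var (n + depthW W))\<close> show ?thesis
      by (fastforce intro: exI[of _ "CESL _ u"] wstep.esL)
  qed (use esL in \<open>fastforce intro: exI[of _ "CESR t _"] wstep.esL\<close>)+
next
  case (esR u u' t)
  then show ?case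
    by (cases W) (fastforce intro: exI[of _ "CESR t _"] exI[of _ "CESL _ u"] wstep.esR)+
qed

section \<open>Postponing gcv steps\<close>

text \<open>The occurrence hypothesis rules out an e step substituting into A.\<close>
lemma wstep_plugS_cases:
  assumes "wstep k (plugS S A) u" and "\<forall>i<length S. \<not> occurs i A" and "k \<noteq> KGCV"
  shows "(\<exists>A'. wstep k A A' \<and> u = plugS S A') \<or>
    (\<exists>S'. length S' = length S \<and> u = plugS S' A \<and> (\<forall>B. wstep k (plugS S B) (plugS S' B)))"
  using assms
proof (induction S arbitrary: u)
  case (Cons w S)
  from \<open>wstep k (plugS (w # S) A) u\<close> show ?case
  proof (cases rule: wstep.cases)
    case (root_e W w')
    then have "plugW W (Var (depthW W)) = plugS S A" "w' = w" by simp_all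
    from plugW_Var_eq_plugS[OF this(1)] show ?thesis
    proof (elim disjE exE conjE)
      fix W1
      assume "W = plugSW S W1" "plugW W1 (Var (depthW W)) = A"
      with Cons.prems(2) show ?thesis
        using occurs_plugW_Var[of "length S" W1] by auto
    next
      fix S1 S2 W1
      assume S: "S = S1 @ plugW W1 (Var (depthW W)) # S2" and W: "W = plugSW S1 (CESR (plugS S2 A) W1)"
      let ?S' = "w # S1 @ plugW W1 (lift (Suc (depthW W)) 0 w) # S2"
      have "wstep k (plugS (w # S) B) (plugS ?S' B)" for B
        using wstep.root_e[of "plugSW S1 (CESR (plugS S2 B) W1)" w] root_e S W by (simp add: plugS_append)
      then show ?thesis
        using root_e S W by (intro disjI2 exI[of _ ?S']) (simp add: plugS_append)
    qed
  next
    case (esL t0 t' w0)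
    then have step: "wstep k (plugS S A) t'" and "u = ES t' w" by simp_all
    have "\<forall>i<length S. \<not> occurs i A" using Cons.prems(2) by simp
    from Cons.IH[OF step this Cons.prems(3)] show ?thesis
    proof (elim disjE exE conjE)
      fix S'
      assume "length S' = length S" "t' = plugS S' A" "\<forall>B. wstep k (plugS S B) (plugS S' B)"
      with \<open>u = ES t' w\<close> show ?thesis by (intro disjI2 exI[of _ "w # S'"]) (simp add: wstep.esL)
    qed (use \<open>u = ES t' w\<close> in auto)
  next
    case (esR w0 w' t0)
    then show ?thesis by (intro disjI2 exI[of _ "w' # S"]) (simp add: wstep.esR)
  qed (use Cons.prems in auto)
qed simp

lemma wgcv_root_postpone:
  assumes "wstep k (plugS S (lift (length S) 0 a)) u" and "k \<noteq> KGCV"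
  shows "(wstep k OO wgcv) (ES (lift 1 0 a) (plugS S (Lam v))) u"
proof -
  have "\<forall>i<length S. \<not> occurs i (lift (length S) 0 a)" by (simp add: occurs_lift)
  from wstep_plugS_cases[OF assms(1) this assms(2)] show ?thesis
  proof (elim disjE exE conjE)
    fix A'
    assume "wstep k (lift (length S) 0 a) A'" and u: "u = plugS S A'"
    from wstep_from_lift[OF this(1)] obtain a' where "wstep k a a'" and A': "A' = lift (length S) 0 a'"
      by blast
    show ?thesis
    proof (rule relcomppI)
      show "wstep k (ES (lift 1 0 a) (plugS S (Lam v))) (ES (lift 1 0 a') (plugS S (Lam v)))"
        using wstep_lift[OF \<open>wstep k a a'\<close>] by (rule wstep.esL)
      show "wgcv (ES (lift 1 0 a') (plugS S (Lam v))) u"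
        using wstep_gcv_lift[of a' S v] u A' by (simp add: wgcv_def)
    qed
  next
    fix S'
    assume S': "length S' = length S" "u = plugS S' (lift (length S) 0 a)" "\<forall>B. wstep k (plugS S B) (plugS S' B)"
    show ?thesis
    proof (rule relcomppI)
      show "wstep k (ES (lift 1 0 a) (plugS S (Lam v))) (ES (lift 1 0 a) (plugS S' (Lam v)))"
        using S' by (simp add: wstep.esR)
      show "wgcv (ES (lift 1 0 a) (plugS S' (Lam v))) u"
        using wstep_gcv_lift[of a S' v] S' by (simp add: wgcv_def)
    qed
  qed
qed

lemma wstep_OO_wgcv_tranclpI: "wstep k t r \<Longrightarrow> wgcv r u \<Longrightarrow> (wstep k OO wgcv\<^sup>+\<^sup>+) t u"
  by auto

lemma wstep_OO_wgcv_tranclp_plugW: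
  "(wstep k OO wgcv\<^sup>+\<^sup>+) t u \<Longrightarrow> (wstep k OO wgcv\<^sup>+\<^sup>+) (plugW W t) (plugW W u)"
  by (auto intro: wstep_plugW wgcv_tranclp_plugW)

lemma wstep_OO_wgcv_tranclp_cong:
  assumes "(wstep k OO wgcv\<^sup>+\<^sup>+) t t'"
  shows "(wstep k OO wgcv\<^sup>+\<^sup>+) (App t u) (App t' u)" "(wstep k OO wgcv\<^sup>+\<^sup>+) (App u t) (App u t')"
    "(wstep k OO wgcv\<^sup>+\<^sup>+) (ES t u) (ES t' u)" "(wstep k OO wgcv\<^sup>+\<^sup>+) (ES u t) (ES u t')"
  using wstep_OO_wgcv_tranclp_plugW[OF assms, of "CAppL Hole u"] wstep_OO_wgcv_tranclp_plugW[OF assms, of "CAppR u Hole"]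
    wstep_OO_wgcv_tranclp_plugW[OF assms, of "CESL Hole u"] wstep_OO_wgcv_tranclp_plugW[OF assms, of "CESR u Hole"]
  by simp_all

lemma wstep_OO_wgcv_tranclp_parallel:
  assumes "wstep KGCV t t'" and "wstep k u u'"
  shows "(wstep k OO wgcv\<^sup>+\<^sup>+) (App t u) (App t' u')" "(wstep k OO wgcv\<^sup>+\<^sup>+) (App u t) (App u' t')"
    "(wstep k OO wgcv\<^sup>+\<^sup>+) (ES t u) (ES t' u')" "(wstep k OO wgcv\<^sup>+\<^sup>+) (ES u t) (ES u' t')"
  using assms
  by (auto simp: wgcv_def intro!: wstep_OO_wgcv_tranclpI[of _ "App t u" "App t u'"]
      wstep_OO_wgcv_tranclpI[of _ "App u t" "App u' t"] wstep_OO_wgcv_tranclpI[of _ "ES t u" "ES t u'"]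
      wstep_OO_wgcv_tranclpI[of _ "ES u t" "ES u' t"] wstep.intros)

lemma wgcv_in_fun_postpone_root_m:
  assumes "wstep KGCV t (plugS S (Lam b))"
  shows "(wstep KM OO wgcv\<^sup>+\<^sup>+) (App t w) (plugS S (ES b (lift (length S) 0 w)))"
proof -
  from wgcv_to_answer[OF assms] obtain S' b' where
    "t = plugS S' (Lam b')"
    "wstep KGCV (plugS S' (ES b' (lift (length S') 0 w))) (plugS S (ES b (lift (length S) 0 w)))"
    by blast
  then show ?thesis by (auto simp: wgcv_def intro: wstep_OO_wgcv_tranclpI wstep.root_m)
qed

lemma wgcv_in_arg_postpone_root_m:
  assumes "wstep KGCV t s"
  shows "(wstep KM OO wgcv\<^sup>+\<^sup>+) (App (plugS S (Lam b)) t) (plugS S (ES b (lift (length S) 0 s)))"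
  using assms
  by (auto simp: wgcv_def intro!: wstep_OO_wgcv_tranclpI wstep.root_m wstep_plugS wstep.esR wstep_lift)

lemma wgcv_in_body_postpone_root_e:
  assumes "wstep KGCV t (plugW W (Var (depthW W)))"
  shows "(wstep KE OO wgcv\<^sup>+\<^sup>+) (ES t w) (ES (plugW W (lift (Suc (depthW W)) 0 w)) w)"
proof -
  from wgcv_to_plugW_Var[of t W 0] assms obtain W' where
    "t = plugW W' (Var (depthW W'))"
    "wstep KGCV (plugW W' (lift (Suc (depthW W')) 0 w)) (plugW W (lift (Suc (depthW W)) 0 w))"
    by auto
  then show ?thesis
    by (intro wstep_OO_wgcv_tranclpI[of _ _ "ES (plugW W' (lift (Suc (depthW W')) 0 w)) w"])
      (simp_all add: wgcv_def wstep.root_e wstep.esL)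
qed

text \<open>The only case where the gcv step is duplicated: the e step copies the substitution containing it.\<close>
lemma wgcv_in_arg_postpone_root_e:
  assumes "wstep KGCV t s"
  shows "(wstep KE OO wgcv\<^sup>+\<^sup>+) (ES (plugW W (Var (depthW W))) t) (ES (plugW W (lift (Suc (depthW W)) 0 s)) s)"
proof (rule relcomppI)
  let ?r = "ES (plugW W (lift (Suc (depthW W)) 0 t)) t"
  show "wstep KE (ES (plugW W (Var (depthW W))) t) ?r"
    by (rule wstep.root_e)
  have "wgcv ?r (ES (plugW W (lift (Suc (depthW W)) 0 s)) t)"
    using assms by (simp add: wgcv_def wstep.esL wstep_plugW wstep_lift)
  moreover have "wgcv (ES (plugW W (lift (Suc (depthW W)) 0 s)) t) (ES (plugW W (lift (Suc (depthW W)) 0 s)) s)"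
    using assms by (simp add: wgcv_def wstep.esR)
  ultimately show "wgcv\<^sup>+\<^sup>+ ?r (ES (plugW W (lift (Suc (depthW W)) 0 s)) s)"
    by auto
qed

lemma wgcv_wstep_postpone:
  assumes "wstep KGCV t s" and "wstep k s u" and "k \<noteq> KGCV"
  shows "(wstep k OO wgcv\<^sup>+\<^sup>+) t u"
  using assms
proof (induction KGCV t s arbitrary: u rule: wstep.induct)
  case (root_gcv t S v)
  then show ?case
    using wgcv_root_postpone[of k S "lower 0 t" u v] by (auto simp: lift_lower)
next
  case (appL t1 s1 w)
  from \<open>wstep k (App s1 w) u\<close> show ?case
  proof (cases rule: wstep.cases)
    case root_m
    with appL.hyps(1) show ?thesis by (simp add: wgcv_in_fun_postpone_root_m)
  qed (use appL in \<open>auto simp: wgcv_def intro: wstep_OO_wgcv_tranclp_cong wstep_OO_wgcv_tranclp_parallel\<close>)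
next
  case (appR t1 s1 w)
  from \<open>wstep k (App w s1) u\<close> show ?case
  proof (cases rule: wstep.cases)
    case root_m
    with appR.hyps(1) show ?thesis by (simp add: wgcv_in_arg_postpone_root_m)
  qed (use appR in \<open>auto simp: wgcv_def intro: wstep_OO_wgcv_tranclp_cong wstep_OO_wgcv_tranclp_parallel\<close>)
next
  case (esL t1 s1 w)
  from \<open>wstep k (ES s1 w) u\<close> show ?case
  proof (cases rule: wstep.cases)
    case root_e
    with esL.hyps(1) show ?thesis by (simp add: wgcv_in_body_postpone_root_e)
  qed (use esL in \<open>auto simp: wgcv_def intro: wstep_OO_wgcv_tranclp_cong wstep_OO_wgcv_tranclp_parallel\<close>)
next
  case (esR t1 s1 w)
  from \<open>wstep k (ES w s1) u\<close> show ?case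
  proof (cases rule: wstep.cases)
    case root_e
    with esR.hyps(1) show ?thesis by (simp add: wgcv_in_arg_postpone_root_e)
  qed (use esR in \<open>auto simp: wgcv_def intro: wstep_OO_wgcv_tranclp_cong wstep_OO_wgcv_tranclp_parallel\<close>)
qed

lemma wgcv_wngcv_postpone: "wgcv OO wngcv \<le> wngcv OO wgcv\<^sup>+\<^sup>+"
proof (intro predicate2I, elim relcomppE)
  fix t s u
  assume "wgcv t s" and "wngcv s u"
  then obtain k where "wstep KGCV t s" "wstep k s u" "k \<noteq> KGCV" "\<And>x y. wstep k x y \<Longrightarrow> wngcv x y"
    by (auto simp: wgcv_def wngcv_def)
  with wgcv_wstep_postpone[of t s k u] show "(wngcv OO wgcv\<^sup>+\<^sup>+) t u"
    by auto
qed

theorem proposition4p4: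
  assumes "wseq t d u"
  shows "\<exists>s h. (wngcv ^^ length (filter (\<lambda>k. k \<noteq> KGCV) d)) t s
              \<and> (wgcv ^^ h) s u
              \<and> h \<ge> length (filter (\<lambda>k. k = KGCV) d)"
  using assms
proof (induction rule: wseq.induct)
  case (nil t)
  show ?case by (intro exI[of _ t] exI[of _ 0]) auto
next
  case (cons k t s ks u)
  then obtain s' h where IH: "(wngcv ^^ length (filter (\<lambda>k. k \<noteq> KGCV) ks)) s s'"
    "(wgcv ^^ h) s' u" "h \<ge> length (filter (\<lambda>k. k = KGCV) ks)"
    by blast
  show ?case
  proof (cases "k = KGCV")
    case True
    with \<open>wstep k t s\<close> IH show ?thesis
      using relpowp_postpone_Cons[OF wgcv_wngcv_postpone, of t s] by (fastforce simp: wgcv_def)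
  next
    case False
    with \<open>wstep k t s\<close> have "wngcv t s"
      using rkind.exhaust[of k] by (auto simp: wngcv_def)
    with False IH show ?thesis
      using relpowp_Suc_I2[of wngcv t s] by fastforce
  qed
qed

end
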